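(* There exists a constant $c>0$ such that for all even positive integers $n,m$, every eigenvalue $\lambda$ of the $nm\times nm$ Laplacian matrix $$\mathbf{L}=\mathbf{I}_n\otimes\big(\mathbf{D}^{(2)}_m+\mathbf{T}_{\sin^2}^{-1}\mathbf{T}_{\cos\sin}\mathbf{D}_m\big)+\mathbf{D}^{(2)}_n\otimes \mathbf{T}_{\sin^2}^{-1}$$ satisfies $|\lambda|\le c\,(n^2m^2+m^3)$. That is, $|\lambda_{\max}(\mathbf{L})|=\mathcal{O}(n^2m^2+m^3)$.
   Context: Here $\otimes$ is the Kronecker product and $\mathbf{I}_n$ is the $n\times n$ identity. For an even integer $m$: - $\mathbf{D}_m=\mathrm{diag}\big(i\cdot(0,-m/2+1,-m/2+2,\ldots,m/2-1)\big)$ ($m\times m$, $i=\sqrt{-1}$). - $\mathbf{D}^{(2)}_m=\mathrm{diag}\big(-j^2\big)_{j=-m/2}^{m/2-1}$; $\mathbf{D}^{(2)}_n$ is defined in the same way with $n$ in place of $m$. - $\mathbf{P}$ is the $(m+1)\times m$ matrix with $\mathbf{P}_{1,1}=\mathbf{P}_{m+1,1}=1/2$, $\mathbf{P}_{j,j}=1$ for $2\le j\le m$, and all other entries zero. - $\mathbf{Q}$ is the $m\times(m+5)$ matrix with $\mathbf{Q}_{j,j+2}=1$ for $1\le j\le m$, $\mathbf{Q}_{1,m+3}=1$, and all other entries zero. - $\mathbf{M}_{\sin^2}$ is the $(m+5)\times(m+5)$ symmetric Toeplitz matrix with $1/2$ on the main diagonal, $-1/4$ in entries $(r,r\pm2)$,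 and zeros elsewhere. - $\mathbf{M}_{\cos\sin}$ is the $(m+5)\times(m+5)$ Toeplitz matrix with entries $(r,r+2)$ equal to $i/4$, entries $(r+2,r)$ equal to $-i/4$, and zeros elsewhere. - $\mathbf{M}(:,3{:}m{+}3)$ denotes the submatrix of columns $3$ through $m+3$. - $\mathbf{T}_{\sin^2}=\mathbf{Q}\,\mathbf{M}_{\sin^2}(:,3{:}m{+}3)\,\mathbf{P}$ and $\mathbf{T}_{\cos\sin}=\mathbf{Q}\,\mathbf{M}_{\cos\sin}(:,3{:}m{+}3)\,\mathbf{P}$ (both $m\times m$). The matrix $\mathbf{T}_{\sin^2}$ is invertible, so $\mathbf{L}$ is well defined. *)

theory Defs
  imports Complex_Main "Jordan_Normal_Form.Matrix" "Jordan_Normal_Form.Char_Poly"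
begin

text \<open>All matrices are complex JNF matrices, indexed from 0 (paper indices minus one).\<close>

definition kron :: "complex mat \<Rightarrow> complex mat \<Rightarrow> complex mat" where
  "kron A B = mat (dim_row A * dim_row B) (dim_col A * dim_col B)
     (\<lambda>(i,j). A $$ (i div dim_row B, j div dim_col B) * B $$ (i mod dim_row B, j mod dim_col B))"

definition Dmat :: "nat \<Rightarrow> complex mat" where
  "Dmat m = mat m m (\<lambda>(i,j). if i = j then (if i = 0 then 0 else \<i> * of_int (int i - int m div 2)) else 0)"

definition D2mat :: "nat \<Rightarrow> complex mat" where
  "D2mat m = mat m m (\<lambda>(i,j). if i = j then - ((of_int (int i - int m div 2)) ^ 2) else 0)"

definition Pmat :: "nat \<Rightarrow> complex mat" where
  "Pmat m = mat (m+1) m (\<lambda>(i,j).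
     if j = 0 \<and> (i = 0 \<or> i = m) then 1/2
     else if i = j \<and> 1 \<le> i \<and> i \<le> m - 1 then 1 else 0)"

definition Qmat :: "nat \<Rightarrow> complex mat" where
  "Qmat m = mat m (m+5) (\<lambda>(i,j). if (i < m \<and> j = i + 2) \<or> (i = 0 \<and> j = m + 2) then 1 else 0)"

definition Msin2 :: "nat \<Rightarrow> complex mat" where
  "Msin2 m = mat (m+5) (m+5) (\<lambda>(r,s). if r = s then 1/2 else if r = s + 2 \<or> s = r + 2 then -1/4 else 0)"

definition Mcossin :: "nat \<Rightarrow> complex mat" where
  "Mcossin m = mat (m+5) (m+5) (\<lambda>(r,s). if s = r + 2 then \<i>/4 else if r = s + 2 then -\<i>/4 else 0)"

text \<open>M(:,3:m+3): columns 3..m+3 (1-based), i.e. 0-based columns 2..m+2.\<close>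
definition colsub :: "nat \<Rightarrow> complex mat \<Rightarrow> complex mat" where
  "colsub m M = mat (dim_row M) (m+1) (\<lambda>(i,j). M $$ (i, j + 2))"

definition Tsin2 :: "nat \<Rightarrow> complex mat" where
  "Tsin2 m = Qmat m * colsub m (Msin2 m) * Pmat m"

definition Tcossin :: "nat \<Rightarrow> complex mat" where
  "Tcossin m = Qmat m * colsub m (Mcossin m) * Pmat m"

definition minv :: "complex mat \<Rightarrow> complex mat" where
  "minv A = (SOME B. B \<in> carrier_mat (dim_row A) (dim_row A) \<and> inverts_mat A B \<and> inverts_mat B A)"

definition Lmat :: "nat \<Rightarrow> nat \<Rightarrow> complex mat" where
  "Lmat n m = kron (1\<^sub>m n) (D2mat m + minv (Tsin2 m) * Tcossin m * Dmat m)
             + kron (D2mat n) (minv (Tsin2 m))"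

end

theory Submission
  imports Defs
begin

text \<open>Every eigenvalue is bounded by the largest absolute row sum, and row sums are
  subadditive, submultiplicative and multiplicative under Kronecker products, so it suffices to
  bound the row sums of the factors of L. The only nontrivial factor is the inverse of T_sin2.
  On odd coordinates T_sin2 is the stencil (-1/4, 1/2, -1/4) on a path with Dirichlet ends, on
  even coordinates the same stencil closed into a cycle through coordinate 0. Its inverse is
  therefore explicit, built from the Green's function (min s t - \<alpha>) (\<beta> - max s t) of the
  second difference, and has entries of size O(m). Hence its row sums are O(m^2), those of
  T_sin2^-1 T_cossin D_m are O(m^3), and those of D2_n \<otimes> T_sin2^-1 are O(n^2 m^2).\<close>

section \<open>Row sums\<close>

definition row_sums_le :: "'a::real_normed_vector mat \<Rightarrow> real \<Rightarrow> bool" where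
  "row_sums_le A r \<longleftrightarrow> (\<forall>i<dim_row A. (\<Sum>j<dim_col A. norm (A $$ (i,j))) \<le> r)"

lemma row_sums_le_nonneg: "row_sums_le A r \<Longrightarrow> 0 < dim_row A \<Longrightarrow> 0 \<le> r"
  unfolding row_sums_le_def by (meson order_trans sum_nonneg norm_ge_zero)

lemma row_sums_le_add:
  assumes "row_sums_le A r" "row_sums_le B s" "B \<in> carrier_mat (dim_row A) (dim_col A)"
  shows "row_sums_le (A + B) (r + s)"
  unfolding row_sums_le_def
proof (intro allI impI)
  fix i assume i: "i < dim_row (A + B)"
  have cols: "dim_col (A + B) = dim_col A" using assms(3) by simp
  have "(\<Sum>j<dim_col (A + B). norm ((A + B) $$ (i,j)))
      \<le> (\<Sum>j<dim_col A. norm (A $$ (i,j)) + norm (B $$ (i,j)))"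
    unfolding cols using i assms(3) by (intro sum_mono) (simp add: norm_triangle_ineq)
  also have "\<dots> \<le> r + s"
    using assms i unfolding row_sums_le_def by (simp add: sum.distrib add_mono)
  finally show "(\<Sum>j<dim_col (A + B). norm ((A + B) $$ (i,j))) \<le> r + s" .
qed

lemma row_sums_le_mult:
  fixes A B :: "'a::real_normed_div_algebra mat"
  assumes "row_sums_le A r" "row_sums_le B s" "dim_col A = dim_row B" "0 \<le> s"
  shows "row_sums_le (A * B) (r * s)"
  unfolding row_sums_le_def
proof (intro allI impI)
  fix i assume i: "i < dim_row (A * B)"
  have "(\<Sum>j<dim_col (A * B). norm ((A * B) $$ (i,j)))
      \<le> (\<Sum>j<dim_col B. \<Sum>k<dim_row B. norm (A $$ (i,k)) * norm (B $$ (k,j)))"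
    unfolding index_mult_mat(3)
  proof (rule sum_mono)
    fix j assume "j \<in> {..<dim_col B}"
    with i assms(3) have "(A * B) $$ (i,j) = (\<Sum>k<dim_row B. A $$ (i,k) * B $$ (k,j))"
      by (auto simp: scalar_prod_def lessThan_atLeast0 intro!: sum.cong)
    then show "norm ((A * B) $$ (i,j)) \<le> (\<Sum>k<dim_row B. norm (A $$ (i,k)) * norm (B $$ (k,j)))"
      using norm_sum[of "\<lambda>k. A $$ (i,k) * B $$ (k,j)" "{..<dim_row B}"] by (simp add: norm_mult)
  qed
  also have "\<dots> = (\<Sum>k<dim_row B. norm (A $$ (i,k)) * (\<Sum>j<dim_col B. norm (B $$ (k,j))))"
    by (subst sum.swap) (simp add: sum_distrib_left)
  also have "\<dots> \<le> (\<Sum>k<dim_row B. norm (A $$ (i,k)) * s)"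
    using assms(2) unfolding row_sums_le_def by (intro sum_mono mult_left_mono) auto
  also have "\<dots> \<le> r * s"
    using assms i unfolding row_sums_le_def by (simp add: sum_distrib_right[symmetric] mult_right_mono)
  finally show "(\<Sum>j<dim_col (A * B). norm ((A * B) $$ (i,j))) \<le> r * s" .
qed

lemma sum_lessThan_mult_div_mod:
  "(\<Sum>j<a * b. f (j div b) (j mod b)) = (\<Sum>x<a. \<Sum>y<b. f x y)" for a b :: nat
proof -
  have bound: "x * b + y < a * b" if "x < a" "y < b" for x y
  proof -
    have "x * b + y < Suc x * b" using \<open>y < b\<close> by simp
    also have "\<dots> \<le> a * b" using \<open>x < a\<close> by (intro mult_le_mono1) simp
    finally show ?thesis .
  qed
  have "(\<Sum>j<a * b. f (j div b) (j mod b)) = (\<Sum>(x, y)\<in>{..<a} \<times> {..<b}. f x y)"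
    by (rule sum.reindex_bij_witness[where i = "\<lambda>(x, y). x * b + y" and j = "\<lambda>j. (j div b, j mod b)"])
      (auto simp: less_mult_imp_div_less bound intro!: mod_less_divisor Nat.gr0I)
  then show ?thesis by (simp add: sum.cartesian_product)
qed

lemma row_sums_le_kron:
  assumes "row_sums_le A r" "row_sums_le B s" "0 \<le> s"
  shows "row_sums_le (kron A B) (r * s)"
  unfolding row_sums_le_def
proof (intro allI impI)
  fix i assume "i < dim_row (kron A B)"
  then have i: "i < dim_row A * dim_row B" by (simp add: kron_def)
  then have "0 < dim_row B" by (cases "dim_row B") auto
  with i have p: "i div dim_row B < dim_row A" and q: "i mod dim_row B < dim_row B"
    by (simp_all add: less_mult_imp_div_less)
  have "(\<Sum>j<dim_col (kron A B). norm (kron A B $$ (i,j)))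
     = (\<Sum>x<dim_col A. \<Sum>y<dim_col B. norm (A $$ (i div dim_row B, x)) * norm (B $$ (i mod dim_row B, y)))"
    using i by (simp add: kron_def norm_mult flip: sum_lessThan_mult_div_mod)
  also have "\<dots> = (\<Sum>x<dim_col A. norm (A $$ (i div dim_row B, x))) * (\<Sum>y<dim_col B. norm (B $$ (i mod dim_row B, y)))"
    by (rule sum_product[symmetric])
  also have "\<dots> \<le> r * s"
    using assms p q row_sums_le_nonneg[OF assms(1)] unfolding row_sums_le_def
    by (intro mult_mono) (auto intro: sum_nonneg)
  finally show "(\<Sum>j<dim_col (kron A B). norm (kron A B $$ (i,j))) \<le> r * s" .
qed

lemma row_sums_le_entries:
  assumes "\<And>i j. i < dim_row A \<Longrightarrow> j < dim_col A \<Longrightarrow> norm (A $$ (i,j)) \<le> c"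
  shows "row_sums_le A (real (dim_col A) * c)"
  unfolding row_sums_le_def
proof (intro allI impI)
  fix i assume "i < dim_row A"
  then have "(\<Sum>j<dim_col A. norm (A $$ (i,j))) \<le> (\<Sum>j<dim_col A. c)"
    using assms by (intro sum_mono) auto
  then show "(\<Sum>j<dim_col A. norm (A $$ (i,j))) \<le> real (dim_col A) * c" by simp
qed

lemma eigenvalue_norm_le_row_sums:
  fixes A :: "'a::real_normed_field mat"
  assumes "eigenvalue A lam" "A \<in> carrier_mat n n" "row_sums_le A r"
  shows "norm lam \<le> r"
proof -
  obtain v where v: "v \<in> carrier_vec n" "v \<noteq> 0\<^sub>v n" "A *\<^sub>v v = lam \<cdot>\<^sub>v v"
    using assms(1,2) unfolding eigenvalue_def eigenvector_def by auto
  obtain j where j: "j < n" "v $ j \<noteq> 0"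
    using v(1,2) by (metis carrier_vecD eq_vecI index_zero_vec)
  define M where "M = Max ((\<lambda>j. norm (v $ j)) ` {..<n})"
  obtain i where i: "i < n" "norm (v $ i) = M"
    using Max_in[of "(\<lambda>j. norm (v $ j)) ` {..<n}"] j(1) unfolding M_def by fastforce
  have v_max: "norm (v $ j) \<le> norm (v $ i)" if "j < n" for j
    using that i(2) unfolding M_def by (auto intro: Max_ge)
  have vi: "0 < norm (v $ i)"
    using v_max[OF j(1)] j(2) zero_less_norm_iff[of "v $ j"] by linarith
  have "lam * v $ i = (A *\<^sub>v v) $ i" using v(1,3) i by simp
  also have "\<dots> = (\<Sum>j<n. A $$ (i,j) * v $ j)"
    using v(1) i assms(2) by (auto simp: scalar_prod_def lessThan_atLeast0 intro!: sum.cong)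
  finally have "norm lam * norm (v $ i) = norm (\<Sum>j<n. A $$ (i,j) * v $ j)"
    by (metis norm_mult)
  also have "\<dots> \<le> (\<Sum>j<n. norm (A $$ (i,j)) * norm (v $ j))"
    using norm_sum[of "\<lambda>j. A $$ (i,j) * v $ j" "{..<n}"] by (simp add: norm_mult)
  also have "\<dots> \<le> (\<Sum>j<n. norm (A $$ (i,j))) * norm (v $ i)"
    by (auto simp: sum_distrib_right intro!: sum_mono mult_left_mono v_max)
  also have "\<dots> \<le> r * norm (v $ i)"
    using assms(2,3) i unfolding row_sums_le_def by (intro mult_right_mono) auto
  finally show ?thesis using vi by simp
qed

section \<open>The action of T_sin2\<close>

lemma Pmat_carrier: "Pmat m \<in> carrier_mat (m + 1) m" by (simp add: Pmat_def)
lemma Qmat_carrier: "Qmat m \<in> carrier_mat m (m + 5)" by (simp add: Qmat_def)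
lemma colsub_carrier: "M \<in> carrier_mat r c \<Longrightarrow> colsub m M \<in> carrier_mat r (m + 1)"
  by (simp add: colsub_def)
lemma Msin2_carrier: "Msin2 m \<in> carrier_mat (m + 5) (m + 5)" by (simp add: Msin2_def)
lemma Mcossin_carrier: "Mcossin m \<in> carrier_mat (m + 5) (m + 5)" by (simp add: Mcossin_def)

lemma Tsin2_carrier: "Tsin2 m \<in> carrier_mat m m"
  unfolding Tsin2_def
  by (rule mult_carrier_mat[OF mult_carrier_mat[OF Qmat_carrier colsub_carrier[OF Msin2_carrier]] Pmat_carrier])

lemma Tcossin_carrier: "Tcossin m \<in> carrier_mat m m"
  unfolding Tcossin_def
  by (rule mult_carrier_mat[OF mult_carrier_mat[OF Qmat_carrier colsub_carrier[OF Mcossin_carrier]] Pmat_carrier])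

text \<open>\<open>extP m x j\<close> is \<open>(P x)\<^sub>j\<close> for \<open>0 \<le> j \<le> m\<close>, extended by zero to all of \<open>\<int>\<close>.\<close>

definition extP :: "nat \<Rightarrow> complex vec \<Rightarrow> int \<Rightarrow> complex" where
  "extP m x j = (if j = 0 \<or> j = int m then x $ 0 / 2 else if 0 < j \<and> j < int m then x $ nat j else 0)"

lemma extP_outside: "j < 0 \<or> int m < j \<Longrightarrow> extP m x j = 0"
  by (auto simp: extP_def)

lemma sum_lessThan_if_int_eq:
  "(\<Sum>j<Suc m. if int j = t then c else 0) = (if 0 \<le> t \<and> t \<le> int m then c else 0)"
proof (cases "0 \<le> t \<and> t \<le> int m")
  case True
  then have "int j = t \<longleftrightarrow> j = nat t" for j by auto
  moreover have "nat t \<in> {..<Suc m}" using True by auto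
  ultimately show ?thesis using True by (simp only: sum.delta' finite_lessThan) simp
qed auto

lemma Pmat_mult_vec:
  assumes "x \<in> carrier_vec m" "0 < m" "j \<le> m"
  shows "(Pmat m *\<^sub>v x) $ j = extP m x (int j)"
proof -
  let ?k = "if j = 0 \<or> j = m then 0 else j"
  have "(Pmat m *\<^sub>v x) $ j = (\<Sum>k\<in>{0..<m}. Pmat m $$ (j,k) * x $ k)"
    using assms by (simp add: scalar_prod_def Pmat_def)
  also have "\<dots> = (\<Sum>k\<in>{0..<m}. if k = ?k then Pmat m $$ (j,k) * x $ k else 0)"
    using assms by (intro sum.cong) (auto simp: Pmat_def)
  also have "\<dots> = extP m x (int j)"
    using assms by (auto simp: Pmat_def extP_def)
  finally show ?thesis .
qed

lemma colsub_Msin2_mult_Pmat_vec: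
  assumes x: "x \<in> carrier_vec m" and "0 < m" "r < m + 5"
  shows "(colsub m (Msin2 m) *\<^sub>v (Pmat m *\<^sub>v x)) $ r
    = extP m x (int r - 2) / 2 - extP m x (int r - 4) / 4 - extP m x (int r) / 4"
proof -
  let ?e = "extP m x"
  have "(colsub m (Msin2 m) *\<^sub>v (Pmat m *\<^sub>v x)) $ r
      = (\<Sum>j<Suc m. colsub m (Msin2 m) $$ (r, j) * (Pmat m *\<^sub>v x) $ j)"
    using assms(3) Pmat_carrier[of m] x by (simp add: scalar_prod_def colsub_def Msin2_def lessThan_atLeast0)
  also have "\<dots> = (\<Sum>j<Suc m. Msin2 m $$ (r, j + 2) * ?e (int j))"
    using assms by (intro sum.cong) (auto simp: colsub_def Msin2_def Pmat_mult_vec)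
  also have "\<dots> = (\<Sum>j<Suc m. (if int j = int r - 2 then ?e (int r - 2) / 2 else 0)
      - (if int j = int r - 4 then ?e (int r - 4) / 4 else 0) - (if int j = int r then ?e (int r) / 4 else 0))"
    using assms by (intro sum.cong) (auto simp: Msin2_def)
  also have "\<dots> = ?e (int r - 2) / 2 - ?e (int r - 4) / 4 - ?e (int r) / 4"
    by (simp only: sum_subtractf sum_lessThan_if_int_eq) (auto simp: extP_outside)
  finally show ?thesis .
qed

lemma Qmat_mult_vec:
  assumes "w \<in> carrier_vec (m + 5)" "i < m"
  shows "(Qmat m *\<^sub>v w) $ i = w $ (i + 2) + (if i = 0 then w $ (m + 2) else 0)"
proof -
  have "(Qmat m *\<^sub>v w) $ i = (\<Sum>r\<in>{0..<m+5}. Qmat m $$ (i, r) * w $ r)"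
    using assms by (simp add: scalar_prod_def Qmat_def)
  also have "\<dots> = (\<Sum>r\<in>{0..<m+5}. (if r = i + 2 then w $ r else 0) + (if r = m + 2 then (if i = 0 then w $ r else 0) else 0))"
    using assms by (intro sum.cong) (auto simp: Qmat_def)
  also have "\<dots> = w $ (i + 2) + (if i = 0 then w $ (m + 2) else 0)"
    using assms by (simp add: sum.distrib)
  finally show ?thesis .
qed

lemma Tsin2_mult_vec:
  assumes x: "x \<in> carrier_vec m" and "2 \<le> m" "i < m"
  shows "(Tsin2 m *\<^sub>v x) $ i = extP m x (int i) / 2 - extP m x (int i - 2) / 4 - extP m x (int i + 2) / 4
     + (if i = 0 then extP m x (int m) / 2 - extP m x (int m - 2) / 4 else 0)"
proof -
  let ?C = "colsub m (Msin2 m)"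
  have C: "?C \<in> carrier_mat (m + 5) (m + 1)" by (rule colsub_carrier[OF Msin2_carrier])
  have Px: "Pmat m *\<^sub>v x \<in> carrier_vec (m + 1)" using Pmat_carrier x by (rule mult_mat_vec_carrier)
  have "Tsin2 m *\<^sub>v x = (Qmat m * ?C) *\<^sub>v (Pmat m *\<^sub>v x)"
    unfolding Tsin2_def by (rule assoc_mult_mat_vec[OF mult_carrier_mat[OF Qmat_carrier C] Pmat_carrier x])
  also have "\<dots> = Qmat m *\<^sub>v (?C *\<^sub>v (Pmat m *\<^sub>v x))"
    by (rule assoc_mult_mat_vec[OF Qmat_carrier C Px])
  finally have "Tsin2 m *\<^sub>v x = Qmat m *\<^sub>v (?C *\<^sub>v (Pmat m *\<^sub>v x))" .
  moreover have "?C *\<^sub>v (Pmat m *\<^sub>v x) \<in> carrier_vec (m + 5)" using C Px by (rule mult_mat_vec_carrier)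
  ultimately show ?thesis
    using assms by (simp add: Qmat_mult_vec colsub_Msin2_mult_Pmat_vec extP_outside algebra_simps)
qed

section \<open>The inverse of T_sin2\<close>

definition dirichlet_green :: "real \<Rightarrow> real \<Rightarrow> int \<Rightarrow> int \<Rightarrow> real" where
  "dirichlet_green \<alpha> \<beta> s t = (of_int (min s t) - \<alpha>) * (\<beta> - of_int (max s t))"

lemma dirichlet_green_second_difference:
  "2 * dirichlet_green \<alpha> \<beta> s t - dirichlet_green \<alpha> \<beta> s (t - 1) - dirichlet_green \<alpha> \<beta> s (t + 1)
    = (if t = s then \<beta> - \<alpha> else 0)"
proof -
  consider "t < s" | "t = s" | "s < t" by linarith
  then show ?thesis
  proof cases
    case 1
    then have "min s (t + 1) = t + 1" "max s (t + 1) = s" by auto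
    with 1 show ?thesis by (simp add: dirichlet_green_def algebra_simps)
  next
    case 2
    then show ?thesis by (simp add: dirichlet_green_def algebra_simps)
  next
    case 3
    then have "min s (t - 1) = s" "max s (t - 1) = t - 1" by auto
    with 3 show ?thesis by (simp add: dirichlet_green_def algebra_simps)
  qed
qed

lemma dirichlet_green_stencil:
  "(d + c * dirichlet_green \<alpha> \<beta> s t) / 2 - (d + c * dirichlet_green \<alpha> \<beta> s (t - 1)) / 4
     - (d + c * dirichlet_green \<alpha> \<beta> s (t + 1)) / 4
   = (if t = s then c * (\<beta> - \<alpha>) / 4 else 0)"
proof -
  have "(d + c * dirichlet_green \<alpha> \<beta> s t) / 2 - (d + c * dirichlet_green \<alpha> \<beta> s (t - 1)) / 4
      - (d + c * dirichlet_green \<alpha> \<beta> s (t + 1)) / 4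
    = c / 4 * (2 * dirichlet_green \<alpha> \<beta> s t - dirichlet_green \<alpha> \<beta> s (t - 1)
      - dirichlet_green \<alpha> \<beta> s (t + 1))"
    by (simp add: field_simps)
  also have "\<dots> = (if t = s then c * (\<beta> - \<alpha>) / 4 else 0)"
    unfolding dirichlet_green_second_difference by simp
  finally show ?thesis .
qed

lemma dirichlet_green_bounds:
  assumes "\<alpha> \<le> of_int (min s t)" "of_int (max s t) \<le> \<beta>"
  shows "0 \<le> dirichlet_green \<alpha> \<beta> s t" "4 * dirichlet_green \<alpha> \<beta> s t \<le> (\<beta> - \<alpha>)\<^sup>2"
proof -
  define u where "u = of_int (min s t) - \<alpha>"
  define v where "v = \<beta> - of_int (max s t)"
  have "0 \<le> u" "0 \<le> v" "u + v \<le> \<beta> - \<alpha>" using assms by (auto simp: u_def v_def)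
  have G: "dirichlet_green \<alpha> \<beta> s t = u * v" by (simp add: dirichlet_green_def u_def v_def)
  show "0 \<le> dirichlet_green \<alpha> \<beta> s t" using \<open>0 \<le> u\<close> \<open>0 \<le> v\<close> by (simp add: G)
  have "4 * (u * v) \<le> (u + v)\<^sup>2" using sum_power2_ge_zero[of "u - v" 0]
    by (simp add: power2_eq_square algebra_simps)
  also have "\<dots> \<le> (\<beta> - \<alpha>)\<^sup>2" using \<open>0 \<le> u\<close> \<open>0 \<le> v\<close> \<open>u + v \<le> \<beta> - \<alpha>\<close> by (intro power_mono) auto
  finally show "4 * dirichlet_green \<alpha> \<beta> s t \<le> (\<beta> - \<alpha>)\<^sup>2" by (simp add: G)
qed

definition Tsin2_inv_entry :: "nat \<Rightarrow> int \<Rightarrow> int \<Rightarrow> real" where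
  "Tsin2_inv_entry k i l =
    (if odd i \<and> odd l then 4 / (k + 1) * dirichlet_green (-1) k (l div 2) (i div 2)
     else if even i \<and> even l then 2 + 4 / k * dirichlet_green 0 k (l div 2) (i div 2)
     else 0)"

lemma Tsin2_inv_entry_second_difference:
  assumes "0 < k"
  shows "Tsin2_inv_entry k i l / 2 - Tsin2_inv_entry k (i - 2) l / 4 - Tsin2_inv_entry k (i + 2) l / 4
    = (if i = l then 1 else 0)"
proof (cases "odd i = odd l")
  case False
  then have "i \<noteq> l" by auto
  with False show ?thesis by (auto simp: Tsin2_inv_entry_def)
next
  case True
  then have same: "i = l \<longleftrightarrow> i div 2 = l div 2" by presburger
  have shift: "(i - 2) div 2 = i div 2 - 1" "(i + 2) div 2 = i div 2 + 1" by simp_all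
  show ?thesis
  proof (cases "odd l")
    case odd: True
    have p: "odd i" "odd (i - 2)" "odd (i + 2)" using True odd by simp_all
    have E: "Tsin2_inv_entry k j l = 0 + 4 / (k + 1) * dirichlet_green (-1) k (l div 2) (j div 2)"
      if "odd j" for j
      using that odd by (simp add: Tsin2_inv_entry_def)
    show ?thesis
      unfolding E[OF p(1)] E[OF p(2)] E[OF p(3)] shift dirichlet_green_stencil using same
      by (simp add: field_simps)
  next
    case even: False
    have p: "even i" "even (i - 2)" "even (i + 2)" using True even by simp_all
    have E: "Tsin2_inv_entry k j l = 2 + 4 / k * dirichlet_green 0 k (l div 2) (j div 2)"
      if "even j" for j
      using that even by (simp add: Tsin2_inv_entry_def)
    show ?thesis
      unfolding E[OF p(1)] E[OF p(2)] E[OF p(3)] shift dirichlet_green_stencil using same assms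
      by simp
  qed
qed

lemma Tsin2_inv_entry_wrap:
  assumes "0 < k" "0 \<le> l" "l < 2 * int k"
  shows "Tsin2_inv_entry k 0 l / 2 + Tsin2_inv_entry k (2 * int k) l / 2
    - Tsin2_inv_entry k 2 l / 4 - Tsin2_inv_entry k (2 * int k - 2) l / 4 = (if l = 0 then 1 else 0)"
proof (cases "even l")
  case True
  define b where "b = l div 2"
  have b: "0 \<le> b" "b < int k" "l = 2 * b" using assms True by (auto simp: b_def)
  have ends: "dirichlet_green 0 k b 0 = 0" "dirichlet_green 0 k b k = 0"
    using b by (auto simp: dirichlet_green_def)
  have "(2 * int k - 2) div 2 = int k - 1" by simp
  then have E: "Tsin2_inv_entry k 0 l = 2" "Tsin2_inv_entry k (2 * int k) l = 2"
      "Tsin2_inv_entry k 2 l = 2 + 4 / k * dirichlet_green 0 k b 1"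
      "Tsin2_inv_entry k (2 * int k - 2) l = 2 + 4 / k * dirichlet_green 0 k b (int k - 1)"
    using True ends by (simp_all add: Tsin2_inv_entry_def b_def)
  show ?thesis
  proof (cases "b = 0")
    case True
    then show ?thesis unfolding E using b by (simp add: dirichlet_green_def)
  next
    case False
    then have G: "dirichlet_green 0 k b 1 = k - b" "dirichlet_green 0 k b (int k - 1) = b"
      using b by (auto simp: dirichlet_green_def)
    show ?thesis unfolding E G using False b assms(1) by (simp add: field_simps)
  qed
qed (auto simp: Tsin2_inv_entry_def)

lemma Tsin2_inv_entry_bounds:
  assumes "0 < k" "0 \<le> i" "i \<le> 2 * int k" "0 \<le> l" "l < 2 * int k"
  shows "0 \<le> Tsin2_inv_entry k i l" "Tsin2_inv_entry k i l \<le> k + 2"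
proof -
  let ?a = "i div 2" and ?b = "l div 2"
  have ranges: "(-1::real) \<le> of_int (min ?b ?a)" "(0::real) \<le> of_int (min ?b ?a)" "of_int (max ?b ?a) \<le> real k"
    using assms by auto
  have odd: "0 \<le> dirichlet_green (-1) k ?b ?a" "4 * dirichlet_green (-1) k ?b ?a \<le> (real k + 1)\<^sup>2"
    using dirichlet_green_bounds[of "-1" ?b ?a k] ranges by auto
  have even: "0 \<le> dirichlet_green 0 k ?b ?a" "4 * dirichlet_green 0 k ?b ?a \<le> (real k)\<^sup>2"
    using dirichlet_green_bounds[of 0 ?b ?a k] ranges by auto
  have "4 / (real k + 1) * dirichlet_green (-1) k ?b ?a \<le> k + 1"
    using odd by (simp add: field_simps power2_eq_square)
  moreover have "4 / k * dirichlet_green 0 k ?b ?a \<le> k"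
    using even assms(1) by (simp add: field_simps power2_eq_square)
  ultimately show "0 \<le> Tsin2_inv_entry k i l" "Tsin2_inv_entry k i l \<le> k + 2"
    using odd(1) even(1) by (auto simp: Tsin2_inv_entry_def)
qed

text \<open>Row 0 is doubled because P halves \<open>x\<^sub>0\<close>, placing half of it at each end.\<close>

definition Tsin2_inv :: "nat \<Rightarrow> complex mat" where
  "Tsin2_inv m = mat m m (\<lambda>(i, l). of_real ((if i = 0 then 2 else 1) * Tsin2_inv_entry (m div 2) i l))"

lemma Tsin2_inv_carrier: "Tsin2_inv m \<in> carrier_mat m m"
  by (simp add: Tsin2_inv_def)

lemma extP_col_Tsin2_inv:
  assumes "m = 2 * k" "0 < k" "l < m" "-1 \<le> j" "j \<le> int m + 1"
  shows "extP m (col (Tsin2_inv m) l) j = of_real (Tsin2_inv_entry k j l)"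
proof -
  have "0 < m" using assms by simp
  then have col: "col (Tsin2_inv m) l $ i = of_real ((if i = 0 then 2 else 1) * Tsin2_inv_entry k i l)"
    if "i < m" for i
    using that assms by (simp add: Tsin2_inv_def)
  have l: "int l div 2 < int k" using assms by linarith
  consider "j = -1" | "j = 0" | "j = int m" | "0 < j" "j < int m" | "j = int m + 1"
    using assms by linarith
  then show ?thesis
  proof cases
    case 1
    then show ?thesis by (simp add: extP_def Tsin2_inv_entry_def dirichlet_green_def)
  next
    case 2
    then show ?thesis using \<open>0 < m\<close> by (simp add: extP_def col)
  next
    case 3
    have "Tsin2_inv_entry k (int m) l = Tsin2_inv_entry k 0 l"
      using assms l by (simp add: Tsin2_inv_entry_def dirichlet_green_def)
    then show ?thesis using 3 \<open>0 < m\<close> by (simp add: extP_def col)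
  next
    case 4
    then show ?thesis by (simp add: extP_def col)
  next
    case 5
    have "(int m + 1) div 2 = int k" using assms by simp
    then show ?thesis using 5 l assms by (simp add: extP_def Tsin2_inv_entry_def dirichlet_green_def)
  qed
qed

lemma Tsin2_mult_col_Tsin2_inv:
  assumes m: "m = 2 * k" and k: "0 < k" and i: "i < m" and l: "l < m"
  shows "(Tsin2 m *\<^sub>v col (Tsin2_inv m) l) $ i = (if i = l then 1 else 0)"
proof -
  have m2: "2 \<le> m" and mk: "int m = 2 * int k" using m k by simp_all
  let ?x = "col (Tsin2_inv m) l" and ?E = "\<lambda>j. Tsin2_inv_entry k j l"
  have x: "?x \<in> carrier_vec m" using Tsin2_inv_carrier l by simp
  have ext: "extP m ?x j = of_real (?E j)" if "-1 \<le> j" "j \<le> int m + 1" for j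
    using extP_col_Tsin2_inv[OF m k l that] .
  show ?thesis
  proof (cases "i = 0")
    case True
    have "(Tsin2 m *\<^sub>v ?x) $ i = extP m ?x 0 / 2 + extP m ?x (int m) / 2 - extP m ?x 2 / 4 - extP m ?x (int m - 2) / 4"
      unfolding Tsin2_mult_vec[OF x m2 i] using True by (simp add: extP_outside)
    also have "\<dots> = of_real (?E 0 / 2 + ?E (2 * int k) / 2 - ?E 2 / 4 - ?E (2 * int k - 2) / 4)"
    proof -
      have "(2::int) \<le> int m + 1" "-1 \<le> 2 * int k - 2" "2 * int k - 2 \<le> int m + 1" "2 * int k \<le> int m + 1"
        using m2 mk by linarith+
      then show ?thesis by (simp add: ext flip: mk)
    qed
    also have "\<dots> = (if i = l then 1 else 0)"
      using True k l m by (simp add: Tsin2_inv_entry_wrap)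
    finally show ?thesis .
  next
    case False
    have "(Tsin2 m *\<^sub>v ?x) $ i = extP m ?x i / 2 - extP m ?x (int i - 2) / 4 - extP m ?x (int i + 2) / 4"
      unfolding Tsin2_mult_vec[OF x m2 i] using False by simp
    also have "\<dots> = of_real (?E i / 2 - ?E (int i - 2) / 4 - ?E (int i + 2) / 4)"
      using False i by (simp add: ext)
    also have "\<dots> = (if i = l then 1 else 0)"
      using k by (simp add: Tsin2_inv_entry_second_difference)
    finally show ?thesis .
  qed
qed

lemma Tsin2_mult_Tsin2_inv:
  assumes "even m" "0 < m"
  shows "Tsin2 m * Tsin2_inv m = 1\<^sub>m m"
proof (rule eq_matI)
  obtain k where m: "m = 2 * k" using assms(1) by blast
  with assms(2) have k: "0 < k" by simp
  fix i l assume "i < dim_row (1\<^sub>m m)" "l < dim_col (1\<^sub>m m)"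
  then have i: "i < m" and l: "l < m" by auto
  then have "(Tsin2 m * Tsin2_inv m) $$ (i, l) = (Tsin2 m *\<^sub>v col (Tsin2_inv m) l) $ i"
    using Tsin2_carrier[of m] Tsin2_inv_carrier[of m] by simp
  with i l show "(Tsin2 m * Tsin2_inv m) $$ (i, l) = 1\<^sub>m m $$ (i, l)"
    by (simp add: Tsin2_mult_col_Tsin2_inv[OF m k i l])
qed (use Tsin2_carrier Tsin2_inv_carrier in auto)

lemma minv_eqI:
  assumes "A \<in> carrier_mat n n" "B \<in> carrier_mat n n" "A * B = 1\<^sub>m n"
  shows "minv A = B"
proof -
  have "B * A = 1\<^sub>m n" by (rule mat_mult_left_right_inverse[OF assms])
  with assms have "B \<in> carrier_mat (dim_row A) (dim_row A) \<and> inverts_mat A B \<and> inverts_mat B A"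
    by (simp add: inverts_mat_def)
  then have "minv A \<in> carrier_mat (dim_row A) (dim_row A) \<and> inverts_mat A (minv A) \<and> inverts_mat (minv A) A"
    unfolding minv_def by (rule someI)
  then have "minv A \<in> carrier_mat n n" "minv A * A = 1\<^sub>m n"
    using assms(1) by (auto simp: inverts_mat_def)
  then have "minv A = minv A * (A * B)" using assms(3) by simp
  also have "\<dots> = B"
    using assoc_mult_mat[OF \<open>minv A \<in> carrier_mat n n\<close> assms(1,2)] \<open>minv A * A = 1\<^sub>m n\<close> assms(2) by simp
  finally show ?thesis .
qed

lemma minv_Tsin2:
  assumes "even m" "0 < m"
  shows "minv (Tsin2 m) = Tsin2_inv m"
  using Tsin2_carrier Tsin2_inv_carrier Tsin2_mult_Tsin2_inv[OF assms] by (rule minv_eqI)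

lemma norm_Tsin2_inv_entry_le:
  assumes "even m" "i < m" "l < m"
  shows "norm (Tsin2_inv m $$ (i, l)) \<le> real m + 4"
proof -
  obtain k where m: "m = 2 * k" using assms(1) by blast
  with assms have k: "0 < k" by simp
  let ?c = "if i = 0 then 2 else 1 :: real"
  have E: "0 \<le> Tsin2_inv_entry k i l" "Tsin2_inv_entry k i l \<le> k + 2"
    using Tsin2_inv_entry_bounds[OF k, of i l] assms m by auto
  have "norm (Tsin2_inv m $$ (i, l)) = ?c * Tsin2_inv_entry k i l"
    using assms m E(1) by (cases "i = 0") (simp_all add: Tsin2_inv_def)
  also have "\<dots> \<le> 2 * (real k + 2)" using E by (intro mult_mono) auto
  finally show ?thesis using m by simp
qed

section \<open>Row sums of the factors of L\<close>

lemma row_sums_le_support: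
  assumes "\<And>i j. i < dim_row A \<Longrightarrow> j < dim_col A \<Longrightarrow> norm (A $$ (i,j)) \<le> (if j \<in> S i then c else 0)"
    and "\<And>i. finite (S i)" "\<And>i. card (S i) \<le> p" "0 \<le> c"
  shows "row_sums_le A (real p * c)"
  unfolding row_sums_le_def
proof (intro allI impI)
  fix i assume "i < dim_row A"
  then have "(\<Sum>j<dim_col A. norm (A $$ (i,j))) \<le> (\<Sum>j<dim_col A. if j \<in> S i then c else 0)"
    using assms(1) by (intro sum_mono) auto
  also have "\<dots> = real (card ({..<dim_col A} \<inter> S i)) * c"
    by (simp add: sum.inter_restrict[symmetric])
  also have "\<dots> \<le> real p * c"
    using assms(2-4) card_mono[OF assms(2), of "{..<dim_col A} \<inter> S i"]
    by (intro mult_right_mono) (auto intro: order_trans)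
  finally show "(\<Sum>j<dim_col A. norm (A $$ (i,j))) \<le> real p * c" .
qed

lemma row_sums_le_one_mat: "row_sums_le (1\<^sub>m n :: complex mat) 1"
proof -
  have "row_sums_le (1\<^sub>m n :: complex mat) (real 1 * 1)"
    by (rule row_sums_le_support[where S = "\<lambda>i. {i}"]) auto
  then show ?thesis by simp
qed

lemma norm_centered_index_le:
  assumes "i < m" shows "cmod (of_int (int i - int m div 2)) \<le> real m"
proof -
  have "cmod (of_int (int i - int m div 2)) = of_int \<bar>int i - int m div 2\<bar>"
    by (simp only: norm_of_int of_int_abs)
  also have "\<dots> \<le> of_int (int m)" using assms by (intro of_int_le_iff[THEN iffD2]) linarith
  finally show ?thesis by simp
qed

lemma row_sums_le_D2mat: "row_sums_le (D2mat m) ((real m)\<^sup>2)"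
proof -
  have "cmod (D2mat m $$ (i, j)) \<le> (if j \<in> {i} then (real m)\<^sup>2 else 0)" if "i < m" "j < m" for i j
    using that norm_centered_index_le[OF that(1)]
    by (auto simp: D2mat_def norm_power intro: power_mono)
  then show ?thesis using row_sums_le_support[of "D2mat m" "\<lambda>i. {i}" "(real m)\<^sup>2" 1]
    by (simp add: D2mat_def)
qed

lemma row_sums_le_Dmat: "row_sums_le (Dmat m) (real m)"
proof -
  have "cmod (Dmat m $$ (i, j)) \<le> (if j \<in> {i} then real m else 0)" if "i < m" "j < m" for i j
    using that norm_centered_index_le[OF that(1)] by (auto simp: Dmat_def norm_mult)
  then show ?thesis using row_sums_le_support[of "Dmat m" "\<lambda>i. {i}" "real m" 1]
    by (simp add: Dmat_def)
qed

lemma row_sums_le_Tcossin: "row_sums_le (Tcossin m) 2"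
proof -
  have card2: "card {a, b} \<le> 2" for a b :: nat by (simp add: card_insert_le_m1)
  have Q: "row_sums_le (Qmat m) (real 2 * 1)"
    by (rule row_sums_le_support[where S = "\<lambda>i. {i + 2, m + 2}"]) (auto simp: Qmat_def card2)
  have C: "row_sums_le (colsub m (Mcossin m)) (real 2 * (1 / 4))"
    by (rule row_sums_le_support[where S = "\<lambda>r. {r, r - 4}"]) (auto simp: colsub_def Mcossin_def card2 norm_divide)
  have P: "row_sums_le (Pmat m) (real 2 * 1)"
    by (rule row_sums_le_support[where S = "\<lambda>i. {0, i}"]) (auto simp: Pmat_def card2)
  have "row_sums_le (Qmat m * colsub m (Mcossin m) * Pmat m) (real 2 * 1 * (real 2 * (1 / 4)) * (real 2 * 1))"
    by (intro row_sums_le_mult[OF row_sums_le_mult[OF Q C] P])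
      (auto simp: Qmat_def colsub_def Mcossin_def Pmat_def)
  then show ?thesis by (simp add: Tcossin_def)
qed

lemma row_sums_le_Tsin2_inv:
  assumes "even m" shows "row_sums_le (Tsin2_inv m) (real m * (real m + 4))"
  using row_sums_le_entries[of "Tsin2_inv m" "real m + 4"] norm_Tsin2_inv_entry_le[OF assms]
  by (simp add: Tsin2_inv_def)

lemma dim_kron [simp]:
  "dim_row (kron A B) = dim_row A * dim_row B" "dim_col (kron A B) = dim_col A * dim_col B"
  by (simp_all add: kron_def)

lemma Lmat_eq:
  assumes "even m" "0 < m"
  shows "Lmat n m = kron (1\<^sub>m n) (D2mat m + Tsin2_inv m * Tcossin m * Dmat m) + kron (D2mat n) (Tsin2_inv m)"
  by (simp add: Lmat_def minv_Tsin2[OF assms])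

lemma Lmat_carrier:
  assumes "even m" "0 < m"
  shows "Lmat n m \<in> carrier_mat (n * m) (n * m)"
proof -
  have "Tsin2_inv m \<in> carrier_mat m m" "Tcossin m \<in> carrier_mat m m" "Dmat m \<in> carrier_mat m m"
    "D2mat m \<in> carrier_mat m m" "D2mat n \<in> carrier_mat n n"
    by (simp_all add: Tsin2_inv_carrier Tcossin_carrier Dmat_def D2mat_def)
  then show ?thesis unfolding Lmat_eq[OF assms] by auto
qed

lemma row_sums_le_Lmat:
  assumes "even m" "0 < m"
  shows "row_sums_le (Lmat n m)
    ((real m)\<^sup>2 + real m * (real m + 4) * 2 * real m + (real n)\<^sup>2 * (real m * (real m + 4)))"
proof -
  let ?X = "Tsin2_inv m"
  have dims: "?X \<in> carrier_mat m m" "Tcossin m \<in> carrier_mat m m" "Dmat m \<in> carrier_mat m m"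
    "D2mat m \<in> carrier_mat m m" "D2mat n \<in> carrier_mat n n"
    by (simp_all add: Tsin2_inv_carrier Tcossin_carrier Dmat_def D2mat_def)
  have XT: "row_sums_le (?X * Tcossin m) (real m * (real m + 4) * 2)"
    using dims by (intro row_sums_le_mult row_sums_le_Tsin2_inv[OF assms(1)] row_sums_le_Tcossin) auto
  have XTD: "row_sums_le (?X * Tcossin m * Dmat m) (real m * (real m + 4) * 2 * real m)"
    using dims by (intro row_sums_le_mult[OF XT row_sums_le_Dmat]) auto
  have B: "row_sums_le (D2mat m + ?X * Tcossin m * Dmat m) ((real m)\<^sup>2 + real m * (real m + 4) * 2 * real m)"
    using dims by (intro row_sums_le_add[OF row_sums_le_D2mat XTD]) auto
  have "row_sums_le (Lmat n m)
      (1 * ((real m)\<^sup>2 + real m * (real m + 4) * 2 * real m) + (real n)\<^sup>2 * (real m * (real m + 4)))"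
    unfolding Lmat_eq[OF assms] using dims
    by (intro row_sums_le_add row_sums_le_kron[OF row_sums_le_one_mat B]
        row_sums_le_kron[OF row_sums_le_D2mat row_sums_le_Tsin2_inv[OF assms(1)]]) auto
  then show ?thesis by simp
qed

lemma Lmat_row_sum_bound_le:
  fixes n m :: real
  assumes "1 \<le> m"
  shows "m\<^sup>2 + m * (m + 4) * 2 * m + n\<^sup>2 * (m * (m + 4)) \<le> 13 * (n ^ 2 * m ^ 2 + m ^ 3)"
proof -
  have "m * m \<le> m * m * m" "n * n * m \<le> n * n * (m * m)"
    using assms by (simp_all add: mult_left_mono)
  moreover have "0 \<le> n * n * (m * m)" "0 \<le> m * m * m" using assms by simp_all
  ultimately have "9 * (m * m) + 2 * (m * m * m) + n * n * (m * m) + 4 * (n * n * m)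
      \<le> 13 * (n * n * (m * m)) + 13 * (m * m * m)"
    by linarith
  then show ?thesis by (simp add: power2_eq_square power3_eq_cube algebra_simps)
qed

theorem mainTheorem3:
  shows "\<exists>c::real. c > 0 \<and> (\<forall>n m :: nat. n > 0 \<longrightarrow> m > 0 \<longrightarrow> even n \<longrightarrow> even m \<longrightarrow>
           (\<forall>lam. eigenvalue (Lmat n m) lam \<longrightarrow>
              cmod lam \<le> c * (real n ^ 2 * real m ^ 2 + real m ^ 3)))"
proof (intro exI[of _ 13] conjI allI impI)
  fix n m :: nat and lam
  assume "n > 0" "m > 0" "even n" "even m" "eigenvalue (Lmat n m) lam"
  then have "cmod lam \<le> (real m)\<^sup>2 + real m * (real m + 4) * 2 * real m + (real n)\<^sup>2 * (real m * (real m + 4))"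
    using eigenvalue_norm_le_row_sums Lmat_carrier row_sums_le_Lmat by blast
  also have "\<dots> \<le> 13 * (real n ^ 2 * real m ^ 2 + real m ^ 3)"
    using \<open>m > 0\<close> by (intro Lmat_row_sum_bound_le) simp
  finally show "cmod lam \<le> 13 * (real n ^ 2 * real m ^ 2 + real m ^ 3)" .
qed simp

end
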